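(* The centre of $\Omega^1_{\mathcal{D}}(\mathcal{B})$ is $\{0\}$.
   Context: $\mathcal{B}=\mathcal{O}(S^2_q)\subset\mathcal{A}=\mathcal{O}(SU_q(2))$ is the Podle\'{s} sphere, $q\in(0,1]$, and $\Omega^1_{\mathcal{D}}(\mathcal{B})=\mathrm{span}\{a[\mathcal{D},b]\}$ are the one-forms of the Dabrowski--Sitarz spectral triple, identified with off-diagonal $2\times2$ matrices with entries in $\mathcal{A}$, so $\Omega^1_{\mathcal{D}}(\mathcal{B})\subset\mathcal{A}^{\oplus2}$. The centre of a $\mathcal{B}$-bimodule $M$ is $\{x\in M: bx=xb\ \forall b\in\mathcal{B}\}$. It is used that the commutant of $\mathcal{B}$ in $\mathcal{A}$ consists only of scalar multiples of the identity, while $\Omega^1_{\mathcal{D}}(\mathcal{B})$ does not intersect the scalars. *)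

theory Defs
  imports Complex_Main
begin

text \<open>Complex algebras are modelled as a ring 'a together with a central embedding
  of the complex scalars.\<close>

definition is_scalar_embedding :: "(complex \<Rightarrow> 'a::ring_1) \<Rightarrow> bool" where
  "is_scalar_embedding sc \<longleftrightarrow>
     (\<forall>z w. sc (z + w) = sc z + sc w) \<and> (\<forall>z w. sc (z * w) = sc z * sc w) \<and> sc 1 = 1 \<and>
     (\<forall>z x. sc z * x = x * sc z)"

definition clinear_map :: "(complex \<Rightarrow> 'a::ring_1) \<Rightarrow> ('a \<Rightarrow> 'a) \<Rightarrow> bool" where
  "clinear_map sc L \<longleftrightarrow> (\<forall>x y. L (x + y) = L x + L y) \<and> (\<forall>z x. L (sc z * x) = sc z * L x)"

definition is_lin_basis :: "(complex \<Rightarrow> 'a::ring_1) \<Rightarrow> ('i \<Rightarrow> 'a) \<Rightarrow> bool" where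
  "is_lin_basis sc e \<longleftrightarrow>
     (\<forall>x. \<exists>!f::'i \<Rightarrow> complex. finite {i. f i \<noteq> 0} \<and> x = (\<Sum>i\<in>{i. f i \<noteq> 0}. sc (f i) * e i))"

definition pbw_mon :: "'a::ring_1 \<Rightarrow> 'a \<Rightarrow> 'a \<Rightarrow> 'a \<Rightarrow> (nat \<times> nat \<times> nat) + (nat \<times> nat \<times> nat) \<Rightarrow> 'a" where
  "pbw_mon a b c d i = (case i of
      Inl (k, m, n) \<Rightarrow> a ^ k * b ^ m * c ^ n
    | Inr (k, m, n) \<Rightarrow> d ^ Suc k * b ^ m * c ^ n)"

text \<open>Defining relations of O(SU_q(2)) (= O(SL_q(2)) as an algebra), generators a b c d.\<close>
definition suq2_rels :: "real \<Rightarrow> (complex \<Rightarrow> 'a::ring_1) \<Rightarrow> 'a \<Rightarrow> 'a \<Rightarrow> 'a \<Rightarrow> 'a \<Rightarrow> bool" where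
  "suq2_rels q sc a b c d \<longleftrightarrow>
     b * a = sc (of_real q) * (a * b) \<and> c * a = sc (of_real q) * (a * c) \<and>
     d * b = sc (of_real q) * (b * d) \<and> d * c = sc (of_real q) * (c * d) \<and>
     b * c = c * b \<and>
     a * d - d * a = sc (of_real (inverse q - q)) * (b * c) \<and>
     a * d - sc (of_real (inverse q)) * (b * c) = 1"

text \<open>'a (with sc) is the algebra O(SU_q(2)) with generators a b c d: the relations hold
  and the PBW monomials form a basis (this characterises the algebra up to isomorphism).\<close>
definition is_Oq_SU2 :: "real \<Rightarrow> (complex \<Rightarrow> 'a::ring_1) \<Rightarrow> 'a \<Rightarrow> 'a \<Rightarrow> 'a \<Rightarrow> 'a \<Rightarrow> bool" where
  "is_Oq_SU2 q sc a b c d \<longleftrightarrow>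
     is_scalar_embedding sc \<and> suq2_rels q sc a b c d \<and> is_lin_basis sc (pbw_mon a b c d)"

definition is_K_action :: "real \<Rightarrow> (complex \<Rightarrow> 'a::ring_1) \<Rightarrow> 'a \<Rightarrow> 'a \<Rightarrow> 'a \<Rightarrow> 'a \<Rightarrow> ('a \<Rightarrow> 'a) \<Rightarrow> bool" where
  "is_K_action s sc a b c d K \<longleftrightarrow>
     clinear_map sc K \<and> (\<forall>x y. K (x * y) = K x * K y) \<and> K 1 = 1 \<and>
     K a = sc (of_real s) * a \<and> K b = sc (of_real (inverse s)) * b \<and>
     K c = sc (of_real s) * c \<and> K d = sc (of_real (inverse s)) * d"

definition twisted_deriv :: "(complex \<Rightarrow> 'a::ring_1) \<Rightarrow> ('a \<Rightarrow> 'a) \<Rightarrow> ('a \<Rightarrow> 'a) \<Rightarrow> ('a \<Rightarrow> 'a) \<Rightarrow> bool" where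
  "twisted_deriv sc K Ki D \<longleftrightarrow> clinear_map sc D \<and> (\<forall>x y. D (x * y) = D x * K y + Ki x * D y)"

text \<open>Left actions of E and F of U_q(su(2)) (the operators partial_e, partial_f).\<close>
definition is_partial_e :: "(complex \<Rightarrow> 'a::ring_1) \<Rightarrow> 'a \<Rightarrow> 'a \<Rightarrow> 'a \<Rightarrow> 'a \<Rightarrow> ('a \<Rightarrow> 'a) \<Rightarrow> ('a \<Rightarrow> 'a) \<Rightarrow> ('a \<Rightarrow> 'a) \<Rightarrow> bool" where
  "is_partial_e sc a b c d K Ki D \<longleftrightarrow> twisted_deriv sc K Ki D \<and> D a = b \<and> D b = 0 \<and> D c = d \<and> D d = 0"

definition is_partial_f :: "(complex \<Rightarrow> 'a::ring_1) \<Rightarrow> 'a \<Rightarrow> 'a \<Rightarrow> 'a \<Rightarrow> 'a \<Rightarrow> ('a \<Rightarrow> 'a) \<Rightarrow> ('a \<Rightarrow> 'a) \<Rightarrow> ('a \<Rightarrow> 'a) \<Rightarrow> bool" where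
  "is_partial_f sc a b c d K Ki D \<longleftrightarrow> twisted_deriv sc K Ki D \<and> D a = 0 \<and> D b = a \<and> D c = 0 \<and> D d = c"

inductive_set subalg_gen :: "(complex \<Rightarrow> 'a::ring_1) \<Rightarrow> 'a set \<Rightarrow> 'a set" for sc G where
  scal: "sc z \<in> subalg_gen sc G"
| gen: "g \<in> G \<Longrightarrow> g \<in> subalg_gen sc G"
| add: "x \<in> subalg_gen sc G \<Longrightarrow> y \<in> subalg_gen sc G \<Longrightarrow> x + y \<in> subalg_gen sc G"
| mult: "x \<in> subalg_gen sc G \<Longrightarrow> y \<in> subalg_gen sc G \<Longrightarrow> x * y \<in> subalg_gen sc G"

text \<open>Standard Podles sphere: generated by ab, bc, cd (scalar multiples of a c^*, c c^*, c a^*).\<close>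
definition podles :: "(complex \<Rightarrow> 'a::ring_1) \<Rightarrow> 'a \<Rightarrow> 'a \<Rightarrow> 'a \<Rightarrow> 'a \<Rightarrow> 'a set" where
  "podles sc a b c d = subalg_gen sc {a * b, b * c, c * d}"

text \<open>One-forms span{x [D,y]}, with [D,y] identified with the off-diagonal pair
  (partial_e y, partial_f y) in A (+) A.\<close>
definition dirac_one_forms :: "'a::ring_1 set \<Rightarrow> ('a \<Rightarrow> 'a) \<Rightarrow> ('a \<Rightarrow> 'a) \<Rightarrow> ('a \<times> 'a) set" where
  "dirac_one_forms B De Df =
     {((\<Sum>(x, y)\<leftarrow>ps. x * De y), (\<Sum>(x, y)\<leftarrow>ps. x * Df y)) | ps. set ps \<subseteq> B \<times> B}"

definition bimod_centre :: "'a::ring_1 set \<Rightarrow> ('a \<times> 'a) set \<Rightarrow> ('a \<times> 'a) set" where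
  "bimod_centre B M = {w \<in> M. \<forall>x\<in>B. x * fst w = fst w * x \<and> x * snd w = snd w * x}"

end

theory Submission
  imports Defs
begin

(*
  Each component u of a central one-form commutes with the generators a b and b c of the
  Podles sphere, and this forces u to be a scalar: in the PBW basis b c commutes with b and c
  but q^2-commutes with a and q^-2-commutes with d, so comparing the coefficients of (b c) u and
  u (b c) removes every monomial containing a or d, and comparing those of (a b) u and u (a b)
  then removes every b^m c^n with m + n > 0.
  On the other hand K fixes the Podles sphere and multiplies the two twisted derivatives of its
  elements by q^-1 and q respectively, so u is an eigenvector of K for an eigenvalue different
  from 1, while scalars are fixed by K.
*)

section \<open>Linear maps and scalar embeddings\<close>

lemma clinear_map_add: "clinear_map sc L \<Longrightarrow> L (x + y) = L x + L y"
  by (simp add: clinear_map_def)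

lemma clinear_map_sc: "clinear_map sc L \<Longrightarrow> L (sc z * x) = sc z * L x"
  by (simp add: clinear_map_def)

lemma clinear_map_0: "clinear_map sc L \<Longrightarrow> L 0 = 0"
  using clinear_map_add[of sc L 0 0] by simp

lemma clinear_map_fixes_sc:
  assumes "clinear_map sc L" and "L 1 = 1"
  shows "L (sc z) = sc z"
  using clinear_map_sc[OF assms(1), of z 1] assms(2) by simp

context
  fixes sc :: "complex \<Rightarrow> 'a::ring_1"
  assumes S: "is_scalar_embedding sc"
begin

lemma sc_add: "sc (z + w) = sc z + sc w"
  using S unfolding is_scalar_embedding_def by blast

lemma sc_mult: "sc (z * w) = sc z * sc w"
  using S unfolding is_scalar_embedding_def by blast

lemma sc_1: "sc 1 = 1"
  using S unfolding is_scalar_embedding_def by blast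

lemma sc_commute: "sc z * x = x * sc z"
  using S unfolding is_scalar_embedding_def by blast

lemma sc_0: "sc 0 = 0"
  using sc_add[of 0 0] by simp

lemma sc_diff: "sc (z - w) = sc z - sc w"
  using sc_add[of "z - w" w] by (simp add: algebra_simps)

lemma mult_sc_left_commute: "x * (sc z * y) = sc z * (x * y)"
  by (metis mult.assoc sc_commute)

lemma sc_mult_sc: "sc z * (sc w * x) = sc (z * w) * x"
  by (simp only: sc_mult mult.assoc)

lemma sc_commute_power_right:
  assumes "x * y = sc \<mu> * (y * x)"
  shows "x * y ^ k = sc (\<mu> ^ k) * (y ^ k * x)"
proof (induction k)
  case 0
  then show ?case by (simp add: sc_1)
next
  case (Suc k)
  have "x * y ^ Suc k = (x * y ^ k) * y"
    by (simp only: power_Suc2 mult.assoc)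
  also have "\<dots> = sc (\<mu> ^ k) * (y ^ k * (x * y))"
    by (simp only: Suc.IH mult.assoc)
  also have "\<dots> = sc (\<mu> ^ Suc k) * (y ^ Suc k * x)"
    by (simp only: assms mult_sc_left_commute[of "y ^ k"] sc_mult_sc power_Suc2 mult.assoc)
  finally show ?case .
qed

lemma sc_commute_power_left:
  assumes "x * y = sc \<mu> * (y * x)"
  shows "x ^ k * y = sc (\<mu> ^ k) * (y * x ^ k)"
proof (induction k)
  case 0
  then show ?case by (simp add: sc_1)
next
  case (Suc k)
  have "x ^ Suc k * y = x * (x ^ k * y)"
    by (simp only: power_Suc mult.assoc)
  also have "\<dots> = sc (\<mu> ^ k) * ((x * y) * x ^ k)"
    by (simp only: Suc.IH mult_sc_left_commute[of x] mult.assoc)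
  also have "\<dots> = sc (\<mu> ^ Suc k) * (y * x ^ Suc k)"
    by (simp only: assms sc_mult_sc power_Suc mult.assoc power_commutes[of \<mu>])
  finally show ?case .
qed

lemma lin_basis_independent:
  assumes basis: "is_lin_basis sc e" and "finite F"
    and "(\<Sum>i\<in>F. sc (g i) * e i) = 0" and "i \<in> F"
  shows "g i = 0"
proof -
  define G where "G j = (if j \<in> F then g j else 0)" for j
  have supp: "{j. G j \<noteq> 0} \<subseteq> F"
    unfolding G_def by auto
  have "(\<Sum>j\<in>{j. G j \<noteq> 0}. sc (G j) * e j) = (\<Sum>j\<in>F. sc (G j) * e j)"
    by (rule sum.mono_neutral_left) (use assms(2) supp sc_0 in auto)
  also have "\<dots> = 0"
    using assms(3) by (simp add: G_def)
  finally have G_repr: "finite {j. G j \<noteq> 0} \<and> 0 = (\<Sum>j\<in>{j. G j \<noteq> 0}. sc (G j) * e j)"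
    using assms(2) supp finite_subset by auto
  obtain f0 where unique: "\<And>f. finite {j. f j \<noteq> 0} \<and> 0 = (\<Sum>j\<in>{j. f j \<noteq> 0}. sc (f j) * e j) \<Longrightarrow> f = f0"
    using basis[unfolded is_lin_basis_def, rule_format, of 0] by (elim ex1E) blast
  have "G = (\<lambda>_. 0)"
    using unique[OF G_repr] unique[of "\<lambda>_. 0"] by simp
  then have "G i = 0"
    by simp
  then show ?thesis
    using assms(4) by (simp add: G_def)
qed

lemma lin_basis_one_neq_zero:
  assumes "is_lin_basis sc e"
  shows "(1::'a) \<noteq> 0"
proof
  assume "(1::'a) = 0"
  then have "(\<Sum>i\<in>{j}. sc ((\<lambda>_. 1) i) * e i) = 0" for j
    by (simp add: sc_1)
  then show False
    using lin_basis_independent[OF assms, of "{j}" "\<lambda>_. 1" j for j] by simp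
qed

lemma lin_basis_sc_inject:
  assumes "is_lin_basis sc e"
  shows "sc z = sc w \<longleftrightarrow> z = w"
proof
  assume "sc z = sc w"
  then have "sc (z - w) = 0"
    by (simp add: sc_diff)
  show "z = w"
  proof (rule ccontr)
    assume "z \<noteq> w"
    then have "sc (z - w) * sc (inverse (z - w)) = 1"
      by (simp add: sc_1 flip: sc_mult)
    with \<open>sc (z - w) = 0\<close> lin_basis_one_neq_zero[OF assms] show False
      by simp
  qed
qed simp

lemma commute_lin_basis_coeff:
  assumes basis: "is_lin_basis sc e" and "finite F" and inj: "inj_on h F"
    and left: "\<And>i. i \<in> F \<Longrightarrow> y * e i = sc (\<alpha> i) * e (h i)"
    and right: "\<And>i. i \<in> F \<Longrightarrow> e i * y = sc (\<beta> i) * e (h i)"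
    and x: "x = (\<Sum>i\<in>F. sc (f i) * e i)" and "y * x = x * y" and "i \<in> F"
  shows "f i * \<alpha> i = f i * \<beta> i"
proof -
  define g where
    "g j = f (the_inv_into F h j) * (\<alpha> (the_inv_into F h j) - \<beta> (the_inv_into F h j))" for j
  have "y * x - x * y = (\<Sum>i\<in>F. sc (f i * (\<alpha> i - \<beta> i)) * e (h i))"
    unfolding x sum_distrib_left sum_distrib_right sum_subtractf[symmetric]
    by (rule sum.cong)
      (simp_all add: left right mult_sc_left_commute[of y] sc_mult_sc mult.assoc sc_diff
        right_diff_distrib left_diff_distrib)
  also have "\<dots> = (\<Sum>j\<in>h ` F. sc (g j) * e j)"
    by (simp add: sum.reindex[OF inj] g_def the_inv_into_f_f[OF inj])
  finally have "(\<Sum>j\<in>h ` F. sc (g j) * e j) = 0"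
    using \<open>y * x = x * y\<close> by simp
  then have "g (h i) = 0"
    using lin_basis_independent[OF basis] \<open>finite F\<close> \<open>i \<in> F\<close> by blast
  then show ?thesis
    using \<open>i \<in> F\<close> by (simp add: g_def the_inv_into_f_f[OF inj] right_diff_distrib)
qed

end

section \<open>The commutant of the Podles sphere\<close>

type_synonym pbw_index = "(nat \<times> nat \<times> nat) + (nat \<times> nat \<times> nat)"

definition pbw_shift_bc :: "pbw_index \<Rightarrow> pbw_index" where
  "pbw_shift_bc i = (case i of
      Inl (k, m, n) \<Rightarrow> Inl (k, Suc m, Suc n)
    | Inr (k, m, n) \<Rightarrow> Inr (k, Suc m, Suc n))"

(* Only applied to indices Inl (0, m, n); the Inr branch just keeps the map injective. *)
definition pbw_shift_ab :: "pbw_index \<Rightarrow> pbw_index" where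
  "pbw_shift_ab i = (case i of Inl (k, m, n) \<Rightarrow> Inl (Suc k, Suc m, n) | Inr t \<Rightarrow> Inr t)"

definition pbw_bc_weight :: "complex \<Rightarrow> pbw_index \<Rightarrow> complex" where
  "pbw_bc_weight Q i = (case i of
      Inl (k, m, n) \<Rightarrow> (Q ^ 2) ^ k
    | Inr (k, m, n) \<Rightarrow> (inverse Q ^ 2) ^ Suc k)"

lemma inj_pbw_shift_bc: "inj pbw_shift_bc"
  unfolding inj_def pbw_shift_bc_def by (auto split: sum.splits prod.splits)

lemma inj_pbw_shift_ab: "inj pbw_shift_ab"
  unfolding inj_def pbw_shift_ab_def by (auto split: sum.splits prod.splits)

lemma pbw_bc_weight_eq_1:
  assumes "\<bar>q\<bar> \<noteq> 1" and "pbw_bc_weight (of_real q) i = 1"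
  shows "\<exists>m n. i = Inl (0, m, n)"
proof (cases i)
  case (Inl t)
  obtain k m n where t: "t = (k, m, n)"
    by (cases t) auto
  have "(of_real q ^ 2 :: complex) ^ k = 1"
    using assms(2) by (simp add: pbw_bc_weight_def Inl t)
  then have "k = 0"
    using assms(1) power_eq_1_iff[of "of_real q ^ 2 :: complex" k]
    by (auto simp: norm_power abs_square_eq_1)
  then show ?thesis
    using Inl t by simp
next
  case (Inr t)
  obtain k m n where t: "t = (k, m, n)"
    by (cases t) auto
  have "(inverse (of_real q) ^ 2 :: complex) ^ Suc k = 1"
    using assms(2) by (simp add: pbw_bc_weight_def Inr t)
  then have False
    using assms(1) power_eq_1_iff[of "inverse (of_real q) ^ 2 :: complex" "Suc k"]
    by (auto simp: norm_power norm_inverse abs_square_eq_1 simp del: power_Suc)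
  then show ?thesis ..
qed

lemma ab_mult_pbw_mon:
  "(a * b) * pbw_mon a b c d (Inl (0, m, n)) = pbw_mon a b c d (pbw_shift_ab (Inl (0, m, n)))"
  by (simp add: pbw_mon_def pbw_shift_ab_def mult.assoc)

context
  fixes q :: real and sc :: "complex \<Rightarrow> 'a::ring_1" and a b c d :: 'a
  assumes S: "is_scalar_embedding sc" and R: "suq2_rels q sc a b c d"
begin

lemma b_mult_a: "b * a = sc (of_real q) * (a * b)"
  using R by (simp add: suq2_rels_def)

lemma c_mult_a: "c * a = sc (of_real q) * (a * c)"
  using R by (simp add: suq2_rels_def)

lemma d_mult_b: "d * b = sc (of_real q) * (b * d)"
  using R by (simp add: suq2_rels_def)

lemma d_mult_c: "d * c = sc (of_real q) * (c * d)"
  using R by (simp add: suq2_rels_def)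

lemma b_mult_c: "b * c = c * b"
  using R by (simp add: suq2_rels_def)

lemma bc_mult_a: "(b * c) * a = sc (of_real q ^ 2) * (a * (b * c))"
proof -
  have "(b * c) * a = sc (of_real q) * ((b * a) * c)"
    by (simp only: mult.assoc c_mult_a mult_sc_left_commute[OF S, of b])
  also have "\<dots> = sc (of_real q ^ 2) * (a * (b * c))"
    by (simp only: b_mult_a mult.assoc sc_mult_sc[OF S] power2_eq_square)
  finally show ?thesis .
qed

lemma bc_mult_d:
  assumes "q \<noteq> 0"
  shows "(b * c) * d = sc (inverse (of_real q) ^ 2) * (d * (b * c))"
proof -
  have "d * (b * c) = (d * b) * c"
    by (rule mult.assoc[symmetric])
  also have "\<dots> = sc (of_real q) * (b * (d * c))"
    by (simp only: d_mult_b mult.assoc)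
  also have "\<dots> = sc (of_real q ^ 2) * ((b * c) * d)"
    by (simp only: d_mult_c mult_sc_left_commute[OF S, of b] sc_mult_sc[OF S] mult.assoc
        power2_eq_square)
  finally have "sc (inverse (of_real q) ^ 2) * (d * (b * c))
      = sc (inverse (of_real q) ^ 2 * of_real q ^ 2) * ((b * c) * d)"
    by (simp only: sc_mult_sc[OF S])
  also have "\<dots> = (b * c) * d"
    using assms by (simp add: sc_1[OF S] field_simps)
  finally show ?thesis ..
qed

lemma bc_powers_mult_bc: "b ^ m * c ^ n * (b * c) = b ^ Suc m * c ^ Suc n"
proof -
  have "b ^ m * c ^ n * (b * c) = b ^ m * (c ^ n * b) * c"
    by (simp only: mult.assoc)
  then show ?thesis
    by (simp only: power_commuting_commutes[OF b_mult_c[symmetric]] power_Suc2 mult.assoc)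
qed

lemma bc_mult_bc_powers: "(b * c) * (b ^ m * c ^ n) = b ^ Suc m * c ^ Suc n"
proof -
  have "(b * c) * (b ^ m * c ^ n) = b * (c * b ^ m) * c ^ n"
    by (simp only: mult.assoc)
  then show ?thesis
    by (simp only: power_commuting_commutes[OF b_mult_c, symmetric] power_Suc mult.assoc)
qed

lemma pbw_mon_mult_bc: "pbw_mon a b c d i * (b * c) = pbw_mon a b c d (pbw_shift_bc i)"
  by (auto simp: pbw_mon_def pbw_shift_bc_def mult.assoc bc_powers_mult_bc[unfolded mult.assoc]
      split: sum.split prod.split)

lemma bc_mult_pbw_mon:
  assumes "q \<noteq> 0"
  shows "(b * c) * pbw_mon a b c d i
    = sc (pbw_bc_weight (of_real q) i) * pbw_mon a b c d (pbw_shift_bc i)"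
proof -
  have bc_mult_mon:
    "(b * c) * (x ^ k * b ^ m * c ^ n) = sc (\<mu> ^ k) * (x ^ k * b ^ Suc m * c ^ Suc n)"
    if "(b * c) * x = sc \<mu> * (x * (b * c))" for x \<mu> k m n
  proof -
    have "(b * c) * (x ^ k * b ^ m * c ^ n) = ((b * c) * x ^ k) * (b ^ m * c ^ n)"
      by (simp only: mult.assoc)
    also have "\<dots> = (sc (\<mu> ^ k) * (x ^ k * (b * c))) * (b ^ m * c ^ n)"
      by (simp only: sc_commute_power_right[OF S that])
    also have "\<dots> = sc (\<mu> ^ k) * (x ^ k * ((b * c) * (b ^ m * c ^ n)))"
      by (simp only: mult.assoc)
    also have "\<dots> = sc (\<mu> ^ k) * (x ^ k * b ^ Suc m * c ^ Suc n)"
      by (simp only: bc_mult_bc_powers mult.assoc[of "x ^ k"])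
    finally show ?thesis .
  qed
  show ?thesis
    by (cases i) (auto simp: pbw_mon_def pbw_shift_bc_def pbw_bc_weight_def
        bc_mult_mon[OF bc_mult_a] bc_mult_mon[OF bc_mult_d[OF assms]] simp del: power_Suc)
qed

lemma pbw_mon_mult_ab:
  "pbw_mon a b c d (Inl (0, m, n)) * (a * b)
    = sc (of_real q ^ (m + n)) * pbw_mon a b c d (pbw_shift_ab (Inl (0, m, n)))"
proof -
  have "b ^ m * c ^ n * (a * b) = b ^ m * (c ^ n * a) * b"
    by (simp only: mult.assoc)
  also have "\<dots> = sc (of_real q ^ n) * ((b ^ m * a) * (c ^ n * b))"
    by (simp only: sc_commute_power_left[OF S c_mult_a] mult_sc_left_commute[OF S, of "b ^ m"]
        mult.assoc)
  also have "\<dots> = sc (of_real q ^ n) * ((sc (of_real q ^ m) * (a * b ^ m)) * (b * c ^ n))"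
    by (simp only: sc_commute_power_left[OF S b_mult_a]
        power_commuting_commutes[OF b_mult_c[symmetric]])
  also have "\<dots> = sc (of_real q ^ (m + n)) * (a * b ^ Suc m * c ^ n)"
    by (simp only: mult.assoc sc_mult_sc[OF S] power_Suc2 power_add
        mult.commute[of "of_real q ^ n :: complex"])
  finally show ?thesis
    by (simp add: pbw_mon_def pbw_shift_ab_def)
qed

end

lemma commute_ab_bc_imp_scalar:
  fixes sc :: "complex \<Rightarrow> 'a::ring_1"
  assumes S: "is_scalar_embedding sc" and R: "suq2_rels q sc a b c d"
    and basis: "is_lin_basis sc (pbw_mon a b c d)" and "q \<noteq> 0" and "\<bar>q\<bar> \<noteq> 1"
    and bc: "(b * c) * x = x * (b * c)" and ab: "(a * b) * x = x * (a * b)"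
  shows "\<exists>z. x = sc z"
proof -
  let ?e = "pbw_mon a b c d"
  obtain f where "finite {i. f i \<noteq> 0}" and "x = (\<Sum>i\<in>{i. f i \<noteq> 0}. sc (f i) * ?e i)"
    using basis unfolding is_lin_basis_def by blast
  moreover define F where "F = {i. f i \<noteq> 0}"
  ultimately have fin: "finite F" and x: "x = (\<Sum>i\<in>F. sc (f i) * ?e i)"
    by simp_all
  have F_Inl_0: "\<exists>m n. i = Inl (0, m, n)" if "i \<in> F" for i
  proof -
    have "f i * pbw_bc_weight (of_real q) i = f i * 1"
      by (rule commute_lin_basis_coeff[where \<alpha> = "pbw_bc_weight (of_real q)" and \<beta> = "\<lambda>_. 1",
            OF S basis fin inj_on_subset[OF inj_pbw_shift_bc subset_UNIV] _ _ x bc that])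
        (simp_all add: bc_mult_pbw_mon[OF S R \<open>q \<noteq> 0\<close>] pbw_mon_mult_bc[OF S R] sc_1[OF S])
    then show ?thesis
      using that pbw_bc_weight_eq_1[OF \<open>\<bar>q\<bar> \<noteq> 1\<close>] by (simp add: F_def)
  qed
  have "F \<subseteq> {Inl (0, 0, 0)}"
  proof
    fix i
    assume "i \<in> F"
    then obtain m n where i: "i = Inl (0, m, n)"
      using F_Inl_0 by blast
    have "f i * 1 = f i * (case i of Inl (_, m, n) \<Rightarrow> of_real q ^ (m + n) | Inr _ \<Rightarrow> 0)"
    proof (rule commute_lin_basis_coeff[where \<alpha> = "\<lambda>_. 1"
          and \<beta> = "\<lambda>j. case j of Inl (_, m, n) \<Rightarrow> of_real q ^ (m + n) | Inr _ \<Rightarrow> 0",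
          OF S basis fin inj_on_subset[OF inj_pbw_shift_ab subset_UNIV] _ _ x ab \<open>i \<in> F\<close>])
      fix j
      assume "j \<in> F"
      then obtain m' n' where j: "j = Inl (0, m', n')"
        using F_Inl_0 by blast
      show "(a * b) * ?e j = sc 1 * ?e (pbw_shift_ab j)"
        by (simp add: j sc_1[OF S] ab_mult_pbw_mon)
      show "?e j * (a * b)
        = sc (case j of Inl (_, m, n) \<Rightarrow> of_real q ^ (m + n) | Inr _ \<Rightarrow> 0) * ?e (pbw_shift_ab j)"
        by (simp add: j pbw_mon_mult_ab[OF S R])
    qed
    then have "(of_real q :: complex) ^ (m + n) = 1"
      using \<open>i \<in> F\<close> by (simp add: F_def i)
    then have "m + n = 0"
      using \<open>\<bar>q\<bar> \<noteq> 1\<close> power_eq_1_iff[of "of_real q :: complex" "m + n"] by auto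
    then show "i \<in> {Inl (0, 0, 0)}"
      using i by simp
  qed
  then consider "F = {}" | "F = {Inl (0, 0, 0)}"
    by (auto simp only: subset_singleton_iff)
  then have "x = sc (f (Inl (0, 0, 0)))"
  proof cases
    case 1
    then have "f (Inl (0, 0, 0)) = 0"
      by (simp add: F_def)
    with 1 show ?thesis
      by (simp add: x sc_0[OF S])
  next
    case 2
    then show ?thesis
      by (simp add: x pbw_mon_def)
  qed
  then show ?thesis ..
qed

section \<open>Weights of the twisted derivations\<close>

lemma alg_hom_fixes_subalg_gen:
  assumes K: "clinear_map sc K" "\<And>x y. K (x * y) = K x * K y" "K 1 = 1"
    and gen: "\<And>g. g \<in> G \<Longrightarrow> K g = g" and "x \<in> subalg_gen sc G"
  shows "K x = x"
  using \<open>x \<in> subalg_gen sc G\<close>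
  by induction (simp_all add: clinear_map_fixes_sc[OF K(1,3)] clinear_map_add[OF K(1)] K(2) gen)

lemma twisted_deriv_weight_subalg_gen:
  fixes sc :: "complex \<Rightarrow> 'a::ring_1"
  assumes S: "is_scalar_embedding sc" and D: "twisted_deriv sc K Ki D"
    and K: "clinear_map sc K" "\<And>x y. K (x * y) = K x * K y"
    and fix_K: "\<And>v. v \<in> subalg_gen sc G \<Longrightarrow> K v = v"
    and fix_Ki: "\<And>v. v \<in> subalg_gen sc G \<Longrightarrow> Ki v = v"
    and weight_gen: "\<And>g. g \<in> G \<Longrightarrow> K (D g) = sc \<mu> * D g" and "x \<in> subalg_gen sc G"
  shows "K (D x) = sc \<mu> * D x"
proof -
  have D_lin: "clinear_map sc D" and leibniz: "\<And>x y. D (x * y) = D x * K y + Ki x * D y"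
    using D by (simp_all add: twisted_deriv_def)
  have "K 1 = 1" "Ki 1 = 1"
    using fix_K[OF subalg_gen.scal[where z = 1]] fix_Ki[OF subalg_gen.scal[where z = 1]]
    by (simp_all add: sc_1[OF S])
  then have "D 1 = D 1 + D 1"
    using leibniz[of 1 1] by simp
  then have D_sc: "D (sc z) = 0" for z
    using clinear_map_sc[OF D_lin, of z 1] by simp
  show ?thesis
    using \<open>x \<in> subalg_gen sc G\<close>
  proof induction
    case (scal z)
    then show ?case
      by (simp add: D_sc clinear_map_0[OF K(1)])
  next
    case (gen g)
    then show ?case
      by (rule weight_gen)
  next
    case (add x y)
    then show ?case
      by (simp add: clinear_map_add[OF D_lin] clinear_map_add[OF K(1)] distrib_left)
  next
    case (mult x y)
    then show ?case
      by (simp add: leibniz clinear_map_add[OF K(1)] K(2) fix_K fix_Ki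
          mult.assoc mult_sc_left_commute[OF S, of x] distrib_left)
  qed
qed

lemma sum_list_weight_vector:
  fixes sc :: "complex \<Rightarrow> 'a::ring_1"
  assumes S: "is_scalar_embedding sc"
    and K: "clinear_map sc K" "\<And>x y. K (x * y) = K x * K y"
    and fix_K: "\<And>x. x \<in> B \<Longrightarrow> K x = x" and weight: "\<And>y. y \<in> B \<Longrightarrow> K (D y) = sc \<mu> * D y"
    and "set ps \<subseteq> B \<times> B"
  shows "K (\<Sum>(x, y)\<leftarrow>ps. x * D y) = sc \<mu> * (\<Sum>(x, y)\<leftarrow>ps. x * D y)"
  using \<open>set ps \<subseteq> B \<times> B\<close>
proof (induction ps)
  case Nil
  then show ?case
    by (simp add: clinear_map_0[OF K(1)])
next
  case (Cons p ps)
  then obtain x y where "p = (x, y)" "x \<in> B" "y \<in> B"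
    by (cases p) auto
  with Cons show ?case
    by (simp add: clinear_map_add[OF K(1)] K(2) fix_K weight mult_sc_left_commute[OF S, of x]
        distrib_left)
qed

lemma podles_central_weight_form_eq_0:
  fixes sc :: "complex \<Rightarrow> 'a::ring_1"
  assumes S: "is_scalar_embedding sc" and R: "suq2_rels q sc a b c d"
    and basis: "is_lin_basis sc (pbw_mon a b c d)" and "q \<noteq> 0" and "\<bar>q\<bar> \<noteq> 1"
    and K: "clinear_map sc K" "\<And>x y. K (x * y) = K x * K y" "K 1 = 1"
    and fix_K: "\<And>v. v \<in> podles sc a b c d \<Longrightarrow> K v = v"
    and weight: "\<And>v. v \<in> podles sc a b c d \<Longrightarrow> K (D v) = sc \<mu> * D v" and "\<mu> \<noteq> 1"
    and ps: "set ps \<subseteq> podles sc a b c d \<times> podles sc a b c d"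
    and central: "\<And>x. x \<in> podles sc a b c d \<Longrightarrow>
      x * (\<Sum>(x, y)\<leftarrow>ps. x * D y) = (\<Sum>(x, y)\<leftarrow>ps. x * D y) * x"
  shows "(\<Sum>(x, y)\<leftarrow>ps. x * D y) = 0"
proof -
  let ?u = "\<Sum>(x, y)\<leftarrow>ps. x * D y"
  have "a * b \<in> podles sc a b c d" "b * c \<in> podles sc a b c d"
    by (simp_all add: podles_def subalg_gen.gen)
  then obtain z where u: "?u = sc z"
    using commute_ab_bc_imp_scalar[OF S R basis \<open>q \<noteq> 0\<close> \<open>\<bar>q\<bar> \<noteq> 1\<close>] central by blast
  have "K ?u = sc \<mu> * ?u"
    by (rule sum_list_weight_vector[OF S K(1,2) fix_K weight ps])
  then have "sc z = sc (\<mu> * z)"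
    using clinear_map_fixes_sc[OF K(1,3)] by (simp add: u sc_mult[OF S])
  then have "(1 - \<mu>) * z = 0"
    by (simp add: lin_basis_sc_inject[OF S basis] algebra_simps)
  then show ?thesis
    using \<open>\<mu> \<noteq> 1\<close> by (simp add: u sc_0[OF S])
qed

lemma zero_mem_bimod_centre_dirac_one_forms: "(0, 0) \<in> bimod_centre B (dirac_one_forms B De Df)"
proof -
  have "(0, 0) \<in> dirac_one_forms B De Df"
    unfolding dirac_one_forms_def by (rule CollectI, rule exI[of _ "[]"]) simp
  then show ?thesis
    by (simp add: bimod_centre_def)
qed

context
  fixes s :: real and sc :: "complex \<Rightarrow> 'a::ring_1" and a b c d :: 'a and K Ki :: "'a \<Rightarrow> 'a"
  assumes S: "is_scalar_embedding sc" and "s \<noteq> 0"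
    and K: "is_K_action s sc a b c d K" and Ki: "is_K_action (inverse s) sc a b c d Ki"
begin

lemma K_action_simps:
  "K (x * y) = K x * K y" "K (sc z) = sc z"
  "K a = sc (of_real s) * a" "K b = sc (of_real (inverse s)) * b"
  "K c = sc (of_real s) * c" "K d = sc (of_real (inverse s)) * d"
  "Ki (x * y) = Ki x * Ki y" "Ki (sc z) = sc z"
  "Ki a = sc (of_real (inverse s)) * a" "Ki b = sc (of_real s) * b"
  "Ki c = sc (of_real (inverse s)) * c" "Ki d = sc (of_real s) * d"
  using K Ki by (simp_all add: is_K_action_def clinear_map_fixes_sc)

lemmas sc_left_commute_gens =
  mult_sc_left_commute[OF S, of a] mult_sc_left_commute[OF S, of b]
  mult_sc_left_commute[OF S, of c] mult_sc_left_commute[OF S, of d]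

lemma K_action_fixes_podles:
  assumes "v \<in> podles sc a b c d"
  shows "K v = v" and "Ki v = v"
proof -
  have "L v = v" if L: "is_K_action t sc a b c d L" and "t \<noteq> 0" for t L
  proof (rule alg_hom_fixes_subalg_gen[of sc L])
    show "clinear_map sc L" "\<And>x y. L (x * y) = L x * L y" "L 1 = 1"
      using L by (simp_all add: is_K_action_def)
    show "L g = g" if "g \<in> {a * b, b * c, c * d}" for g
      using that L \<open>t \<noteq> 0\<close>
      by (auto simp: is_K_action_def sc_left_commute_gens sc_mult_sc[OF S] mult.assoc sc_1[OF S]
          simp flip: of_real_mult)
  qed (use assms in \<open>simp add: podles_def\<close>)
  then show "K v = v" and "Ki v = v"
    using K Ki \<open>s \<noteq> 0\<close> by simp_all
qed

lemma podles_twisted_deriv_weight: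
  assumes D: "twisted_deriv sc K Ki D"
    and gen: "\<And>g. g \<in> {a * b, b * c, c * d} \<Longrightarrow> K (D g) = sc \<mu> * D g"
    and "v \<in> podles sc a b c d"
  shows "K (D v) = sc \<mu> * D v"
proof (rule twisted_deriv_weight_subalg_gen[OF S D, where G = "{a * b, b * c, c * d}"])
  show "clinear_map sc K" "\<And>x y. K (x * y) = K x * K y"
    using K by (simp_all add: is_K_action_def)
qed (use K_action_fixes_podles gen assms(3) in \<open>simp_all add: podles_def\<close>)

lemma podles_De_weight:
  assumes "is_partial_e sc a b c d K Ki De" and "v \<in> podles sc a b c d"
  shows "K (De v) = sc (of_real (inverse s ^ 2)) * De v"
proof (rule podles_twisted_deriv_weight[OF _ _ assms(2)])
  have De: "De (x * y) = De x * K y + Ki x * De y" "De a = b" "De b = 0" "De c = d" "De d = 0"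
    for x y
    using assms(1) by (simp_all add: is_partial_e_def twisted_deriv_def)
  show "twisted_deriv sc K Ki De"
    using assms(1) by (simp add: is_partial_e_def)
  show "K (De g) = sc (of_real (inverse s ^ 2)) * De g" if "g \<in> {a * b, b * c, c * d}" for g
    using that \<open>s \<noteq> 0\<close>
    by (auto simp: De K_action_simps sc_left_commute_gens sc_mult_sc[OF S] mult.assoc field_simps
        power2_eq_square)
qed

lemma podles_Df_weight:
  assumes "is_partial_f sc a b c d K Ki Df" and "v \<in> podles sc a b c d"
  shows "K (Df v) = sc (of_real (s ^ 2)) * Df v"
proof (rule podles_twisted_deriv_weight[OF _ _ assms(2)])
  have Df: "Df (x * y) = Df x * K y + Ki x * Df y" "Df a = 0" "Df b = a" "Df c = 0" "Df d = c"
    for x y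
    using assms(1) by (simp_all add: is_partial_f_def twisted_deriv_def)
  show "twisted_deriv sc K Ki Df"
    using assms(1) by (simp add: is_partial_f_def)
  show "K (Df g) = sc (of_real (s ^ 2)) * Df g" if "g \<in> {a * b, b * c, c * d}" for g
    using that \<open>s \<noteq> 0\<close>
    by (auto simp: Df K_action_simps sc_left_commute_gens sc_mult_sc[OF S] mult.assoc field_simps
        power2_eq_square)
qed

end

theorem mainTheorem16:
  fixes q :: real and sc :: "complex \<Rightarrow> 'a::ring_1"
    and a b c d :: 'a and K Ki De Df :: "'a \<Rightarrow> 'a"
  assumes "0 < q" and "q < 1"
    and "is_Oq_SU2 q sc a b c d"
    and "is_K_action (sqrt q) sc a b c d K"
    and "is_K_action (inverse (sqrt q)) sc a b c d Ki"
    and "is_partial_e sc a b c d K Ki De"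
    and "is_partial_f sc a b c d K Ki Df"
  shows "bimod_centre (podles sc a b c d) (dirac_one_forms (podles sc a b c d) De Df) = {(0, 0)}"
proof -
  let ?B = "podles sc a b c d"
  have S: "is_scalar_embedding sc" and R: "suq2_rels q sc a b c d"
    and basis: "is_lin_basis sc (pbw_mon a b c d)"
    using assms(3) by (simp_all add: is_Oq_SU2_def)
  have K: "clinear_map sc K" "\<And>x y. K (x * y) = K x * K y" "K 1 = 1"
    using assms(4) by (simp_all add: is_K_action_def)
  have q: "q \<noteq> 0" "\<bar>q\<bar> \<noteq> 1" "sqrt q \<noteq> 0"
    and sqrt_sq: "sqrt q ^ 2 = q" "inverse (sqrt q) ^ 2 = inverse q"
    using assms(1,2) by (simp_all add: power_inverse)
  note fix_K = K_action_fixes_podles(1)[OF S q(3) assms(4,5)]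
    and De_weight = podles_De_weight[OF S q(3) assms(4-6), unfolded sqrt_sq]
    and Df_weight = podles_Df_weight[OF S q(3) assms(4,5,7), unfolded sqrt_sq]
    and central_form_eq_0 = podles_central_weight_form_eq_0[OF S R basis q(1,2) K]
  have "w = (0, 0)" if w: "w \<in> bimod_centre ?B (dirac_one_forms ?B De Df)" for w
  proof -
    obtain ps where "set ps \<subseteq> ?B \<times> ?B"
      and "w = ((\<Sum>(x, y)\<leftarrow>ps. x * De y), (\<Sum>(x, y)\<leftarrow>ps. x * Df y))"
      and "\<forall>x\<in>?B. x * fst w = fst w * x \<and> x * snd w = snd w * x"
      using w unfolding bimod_centre_def dirac_one_forms_def by auto
    then show ?thesis
      using central_form_eq_0[where D = De and \<mu> = "of_real (inverse q)"]
        central_form_eq_0[where D = Df and \<mu> = "of_real q"] fix_K De_weight Df_weight assms(2)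
      by simp
  qed
  then show ?thesis
    using zero_mem_bimod_centre_dirac_one_forms by blast
qed

end
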